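(* Let $C\subseteq\mathbb{F}_2^n$ be a code. For every $i\in\{0,\dots,n\}$: (1) $\displaystyle\sum_{j=0}^n\ \sum_{s\in\mathcal S\left(\frac{\delta(C)+(\gamma-1)(i-j)}{2}\right)}\lambda(i,j,s)\,W^{\mathrm{H}}_j(C)\le\binom ni$; (2) $\displaystyle\sum_{j=0}^n\ \sum_{s\in\mathcal S\left(\frac{\hat\delta(C)+(\gamma-1)i}{2}\right)}\lambda(i,j,s)\,W^{\mathrm{H}}_j(C)\le\binom ni$.
   Context: Let $n\ge2$ and fix reals $0<p\le q<1/2$. Let $\gamma:=\log_{q/(1-p)}\left(\frac{p}{1-q}\right)$. For $x\in\mathbb{F}_2^n$, $\omega^{\mathrm{H}}(x)=|\{i:x_i=1\}|$; $d_{ab}(y,x)=|\{i: y_i=a,\ x_i=b\}|$. Discrepancy: $\delta(y,x):=\gamma\,d_{10}(y,x)+d_{01}(y,x)$; symmetric discrepancy: $\hat\delta(y,x):=\delta(y,x)-\omega^{\mathrm{H}}(y)(\gamma-1)$. A code is $C\subseteq\mathbb{F}_2^n$ with $|C|\ge2$; $\delta(C)$, $\hat\delta(C)$ are the minima of $\delta$, $\hat\delta$ over ordered pairs of distinct codewords. $W^{\mathrm{H}}_j(C)$ is the number of codewords of Hamming weight $j$. $\mathcal S:=\{a+\gamma b:a,b\in\mathbb N\}$, $\mathcal S(h):=\{s\in\mathcal S:0\le s<h\}$. For real $a,b$, $\mathrm{Bin}(a,b)=\binom ab$ if $a,b\in\mathbb N$ and $0$ otherwise, and $\lambda(i,j,s):=\mathrm{Bin}\!\left(j,\frac{i\gamma-s+j}{\gamma+1}\right)\mathrm{Bin}\!\left(n-j,\frac{s-j+i}{\gamma+1}\right)$.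 *)

theory Defs
  imports Complex_Main
begin

text \<open>Vectors of F_2^n are represented as boolean lists of length n (True = 1).\<close>

definition vecs :: "nat \<Rightarrow> bool list set" where
  "vecs n = {x. length x = n}"

definition gam :: "real \<Rightarrow> real \<Rightarrow> real" where
  "gam p q = log (q / (1 - p)) (p / (1 - q))"

definition hw :: "bool list \<Rightarrow> nat" where
  "hw x = card {i. i < length x \<and> x ! i}"

definition dab :: "bool \<Rightarrow> bool \<Rightarrow> bool list \<Rightarrow> bool list \<Rightarrow> nat" where
  "dab a b y x = card {i. i < length y \<and> y ! i = a \<and> x ! i = b}"

definition disc :: "real \<Rightarrow> bool list \<Rightarrow> bool list \<Rightarrow> real" where
  "disc g y x = g * real (dab True False y x) + real (dab False True y x)"

definition sdisc :: "real \<Rightarrow> bool list \<Rightarrow> bool list \<Rightarrow> real" where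
  "sdisc g y x = disc g y x - real (hw y) * (g - 1)"

definition is_code :: "nat \<Rightarrow> bool list set \<Rightarrow> bool" where
  "is_code n C \<longleftrightarrow> C \<subseteq> vecs n \<and> card C \<ge> 2"

definition code_disc :: "real \<Rightarrow> bool list set \<Rightarrow> real" where
  "code_disc g C = Min {disc g y x | y x. y \<in> C \<and> x \<in> C \<and> y \<noteq> x}"

definition code_sdisc :: "real \<Rightarrow> bool list set \<Rightarrow> real" where
  "code_sdisc g C = Min {sdisc g y x | y x. y \<in> C \<and> x \<in> C \<and> y \<noteq> x}"

definition WH :: "nat \<Rightarrow> bool list set \<Rightarrow> nat" where
  "WH j C = card {x \<in> C. hw x = j}"

definition Sset :: "real \<Rightarrow> real set" where
  "Sset g = {real a + g * real b | a b. True}"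

definition Sbelow :: "real \<Rightarrow> real \<Rightarrow> real set" where
  "Sbelow g h = {s \<in> Sset g. 0 \<le> s \<and> s < h}"

definition Bin :: "real \<Rightarrow> real \<Rightarrow> real" where
  "Bin a b = (if a \<in> \<nat> \<and> b \<in> \<nat> then real (nat \<lfloor>a\<rfloor> choose nat \<lfloor>b\<rfloor>) else 0)"

definition lam :: "nat \<Rightarrow> real \<Rightarrow> nat \<Rightarrow> nat \<Rightarrow> real \<Rightarrow> real" where
  "lam n g i j s = Bin (real j) ((real i * g - s + real j) / (g + 1))
                 * Bin (real n - real j) ((s - real j + real i) / (g + 1))"

end

theory Submission
  imports Defs
begin

text \<open>Sphere packing. The number of words y of weight i with \<open>\<delta>(y,x) = s\<close> is
\<open>\<lambda>(i, w(x), s)\<close>: such y are determined by how many of the ones of x they keep and how many new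
ones they add, and these two numbers are pinned down by i and s. Summing over the admissible s,
the left-hand sides of both inequalities count pairs (x, y) with x \<in> C, w(y) = i and y in a
discrepancy ball around x whose radius depends only on w(x). Coordinatewise one checks
\<open>\<delta>(x,x') + \<delta>(x',x) \<le> \<Sum>\<^sub>z (2\<delta>(y,z) - (\<gamma>-1)(w(y)-w(z)))\<close> and
\<open>2\<hat>\<delta>(x,x') \<le> \<Sum>\<^sub>z (2\<delta>(y,z) - (\<gamma>-1)w(y))\<close> for z \<in> {x, x'}, so the balls around distinct
codewords are disjoint and the count is at most the number of words of weight i.\<close>

subsection \<open>Words as subsets of the coordinates\<close>

definition support :: "bool list \<Rightarrow> nat set" where
  "support y = {k. k < length y \<and> y!k}"

lemma finite_vecs: "finite (vecs n)"
proof -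
  have "vecs n = {xs. set xs \<subseteq> UNIV \<and> length xs = n}" by (auto simp: vecs_def)
  then show ?thesis using finite_lists_length_eq[of "UNIV :: bool set" n] by simp
qed

lemma bij_betw_support: "bij_betw support (vecs n) (Pow {..<n})"
proof (rule bij_betw_imageI)
  show "inj_on support (vecs n)"
  proof (rule inj_onI)
    fix y y' assume "y \<in> vecs n" "y' \<in> vecs n" "support y = support y'"
    then show "y = y'"
      by (intro nth_equalityI) (auto simp: vecs_def support_def set_eq_iff)
  qed
  show "support ` vecs n = Pow {..<n}"
  proof
    show "support ` vecs n \<subseteq> Pow {..<n}" by (auto simp: support_def vecs_def)
    show "Pow {..<n} \<subseteq> support ` vecs n"
    proof
      fix Y assume "Y \<in> Pow {..<n}"
      then have "support (map (\<lambda>k. k \<in> Y) [0..<n]) = Y" by (auto simp: support_def)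
      moreover have "map (\<lambda>k. k \<in> Y) [0..<n] \<in> vecs n" by (simp add: vecs_def)
      ultimately show "Y \<in> support ` vecs n" by blast
    qed
  qed
qed

lemma card_vecs_support: "card {y \<in> vecs n. P (support y)} = card {Y. Y \<subseteq> {..<n} \<and> P Y}"
proof -
  have "support ` {y \<in> vecs n. P (support y)} = {Y \<in> support ` vecs n. P Y}" by blast
  also have "\<dots> = {Y. Y \<subseteq> {..<n} \<and> P Y}"
    unfolding bij_betw_imp_surj_on[OF bij_betw_support] by blast
  finally have image: "support ` {y \<in> vecs n. P (support y)} = {Y. Y \<subseteq> {..<n} \<and> P Y}" .
  have "inj_on support {y \<in> vecs n. P (support y)}"
    by (rule inj_on_subset[OF bij_betw_imp_inj_on[OF bij_betw_support]]) blast
  from card_image[OF this] show ?thesis unfolding image by (rule sym)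
qed

lemma hw_eq_card_support: "hw y = card (support y)"
  by (simp add: hw_def support_def)

lemma hw_le_length: "x \<in> vecs n \<Longrightarrow> hw x \<le> n"
  using card_mono[of "{..<n}" "support x"] by (auto simp: hw_eq_card_support support_def vecs_def)

lemma dab_eq_card_Diff:
  "length x = length y \<Longrightarrow>
    dab True False y x = card (support y - support x) \<and> dab False True y x = card (support x - support y)"
  unfolding dab_def support_def by (auto intro!: arg_cong[where f = card])

lemma card_weight_vecs: "card {y \<in> vecs n. hw y = i} = n choose i"
  using card_vecs_support[of n "\<lambda>Y. card Y = i"] n_subsets[of "{..<n}" i]
  by (simp add: hw_eq_card_support)

definition coord_disc :: "real \<Rightarrow> bool \<Rightarrow> bool \<Rightarrow> real" where
  "coord_disc g a b = g * of_bool (a \<and> \<not> b) + of_bool (\<not> a \<and> b)"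

lemma card_less_eq_sum_of_bool: "real (card {k. k < (n::nat) \<and> P k}) = (\<Sum>k<n. of_bool (P k))"
proof -
  have "(\<Sum>k<n. of_bool (P k)) = real (card ({..<n} \<inter> {k. P k}))"
    by (rule sum_of_bool_eq) simp_all
  moreover have "{k. k < n \<and> P k} = {..<n} \<inter> {k. P k}" by auto
  ultimately show ?thesis by simp
qed

lemma hw_eq_sum: "length y = n \<Longrightarrow> real (hw y) = (\<Sum>k<n. of_bool (y!k))"
  unfolding hw_def using card_less_eq_sum_of_bool[of n "\<lambda>k. y!k"] by simp

lemma disc_eq_sum: "length y = n \<Longrightarrow> disc g y x = (\<Sum>k<n. coord_disc g (y!k) (x!k))"
  unfolding disc_def dab_def coord_disc_def
  using card_less_eq_sum_of_bool[of n "\<lambda>k. y!k = True \<and> x!k = False"]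
    card_less_eq_sum_of_bool[of n "\<lambda>k. y!k = False \<and> x!k = True"]
  by (simp add: sum.distrib sum_distrib_left)

subsection \<open>Disjointness of the balls\<close>

lemma coord_disc_sym_le:
  assumes "g > 0"
  shows "coord_disc g a b + coord_disc g b a
    \<le> (2 * coord_disc g c a - (g - 1) * (of_bool c - of_bool a))
      + (2 * coord_disc g c b - (g - 1) * (of_bool c - of_bool b))"
  using assms by (cases a; cases b; cases c) (auto simp: coord_disc_def)

lemma coord_sdisc_le:
  assumes "g > 0"
  shows "2 * (coord_disc g a b - of_bool a * (g - 1))
    \<le> (2 * coord_disc g c a - (g - 1) * of_bool c) + (2 * coord_disc g c b - (g - 1) * of_bool c)"
  using assms by (cases a; cases b; cases c) (auto simp: coord_disc_def)

lemma disc_sym_le: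
  assumes "g > 0" and "x \<in> vecs n" "x' \<in> vecs n" "y \<in> vecs n"
  shows "disc g x x' + disc g x' x
    \<le> (2 * disc g y x - (g - 1) * (real (hw y) - real (hw x)))
      + (2 * disc g y x' - (g - 1) * (real (hw y) - real (hw x')))"
proof -
  have len: "length x = n" "length x' = n" "length y = n" using assms by (auto simp: vecs_def)
  have lin: "(\<Sum>k<n. 2 * a k - (g - 1) * (b k - c k))
      = 2 * sum a {..<n} - (g - 1) * (sum b {..<n} - sum c {..<n})" for a b c :: "nat \<Rightarrow> real"
    by (simp add: sum_subtractf sum_distrib_left right_diff_distrib)
  have "disc g x x' + disc g x' x = (\<Sum>k<n. coord_disc g (x!k) (x'!k) + coord_disc g (x'!k) (x!k))"
    using len by (simp only: disc_eq_sum sum.distrib)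
  also have "\<dots> \<le> (\<Sum>k<n. (2 * coord_disc g (y!k) (x!k) - (g - 1) * (of_bool (y!k) - of_bool (x!k)))
      + (2 * coord_disc g (y!k) (x'!k) - (g - 1) * (of_bool (y!k) - of_bool (x'!k))))"
    by (intro sum_mono coord_disc_sym_le \<open>g > 0\<close>)
  also have "\<dots> = (2 * disc g y x - (g - 1) * (real (hw y) - real (hw x)))
      + (2 * disc g y x' - (g - 1) * (real (hw y) - real (hw x')))"
    using len by (simp only: disc_eq_sum hw_eq_sum sum.distrib lin)
  finally show ?thesis .
qed

lemma sdisc_le:
  assumes "g > 0" and "x \<in> vecs n" "x' \<in> vecs n" "y \<in> vecs n"
  shows "2 * sdisc g x x'
    \<le> (2 * disc g y x - (g - 1) * real (hw y)) + (2 * disc g y x' - (g - 1) * real (hw y))"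
proof -
  have len: "length x = n" "length x' = n" "length y = n" using assms by (auto simp: vecs_def)
  have lin: "(\<Sum>k<n. 2 * a k - (g - 1) * b k) = 2 * sum a {..<n} - (g - 1) * sum b {..<n}"
    "(\<Sum>k<n. 2 * (a k - b k * (g - 1))) = 2 * (sum a {..<n} - sum b {..<n} * (g - 1))"
    for a b :: "nat \<Rightarrow> real"
    by (simp_all add: sum_subtractf sum_distrib_left sum_distrib_right)
  have "2 * sdisc g x x' = (\<Sum>k<n. 2 * (coord_disc g (x!k) (x'!k) - of_bool (x!k) * (g - 1)))"
    using len unfolding sdisc_def by (simp only: disc_eq_sum hw_eq_sum lin)
  also have "\<dots> \<le> (\<Sum>k<n. (2 * coord_disc g (y!k) (x!k) - (g - 1) * of_bool (y!k))
      + (2 * coord_disc g (y!k) (x'!k) - (g - 1) * of_bool (y!k)))"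
    by (intro sum_mono coord_sdisc_le \<open>g > 0\<close>)
  also have "\<dots> = (2 * disc g y x - (g - 1) * real (hw y)) + (2 * disc g y x' - (g - 1) * real (hw y))"
    using len by (simp only: disc_eq_sum hw_eq_sum sum.distrib lin)
  finally show ?thesis .
qed

lemma finite_off_diagonal_image: "finite C \<Longrightarrow> finite {f y x | y x. y \<in> C \<and> x \<in> C \<and> y \<noteq> x}"
  by (rule finite_subset[of _ "(\<lambda>(y, x). f y x) ` (C \<times> C)"]) auto

lemma code_disc_le: "is_code n C \<Longrightarrow> x \<in> C \<Longrightarrow> x' \<in> C \<Longrightarrow> x \<noteq> x' \<Longrightarrow> code_disc g C \<le> disc g x x'"
  unfolding code_disc_def is_code_def
  by (rule Min_le[OF finite_off_diagonal_image]) (auto intro: finite_subset[OF _ finite_vecs])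

lemma code_sdisc_le: "is_code n C \<Longrightarrow> x \<in> C \<Longrightarrow> x' \<in> C \<Longrightarrow> x \<noteq> x' \<Longrightarrow> code_sdisc g C \<le> sdisc g x x'"
  unfolding code_sdisc_def is_code_def
  by (rule Min_le[OF finite_off_diagonal_image]) (auto intro: finite_subset[OF _ finite_vecs])

lemma disc_balls_disjoint:
  assumes "is_code n C" "g > 0" and x: "x \<in> C" "x' \<in> C" "x \<noteq> x'" and y: "y \<in> vecs n"
    and "disc g y x < (code_disc g C + (g - 1) * (real (hw y) - real (hw x))) / 2"
    and "disc g y x' < (code_disc g C + (g - 1) * (real (hw y) - real (hw x'))) / 2"
  shows False
proof -
  have "C \<subseteq> vecs n" using \<open>is_code n C\<close> by (simp add: is_code_def)
  then have "disc g x x' + disc g x' x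
      \<le> (2 * disc g y x - (g - 1) * (real (hw y) - real (hw x)))
        + (2 * disc g y x' - (g - 1) * (real (hw y) - real (hw x')))"
    using disc_sym_le[OF \<open>g > 0\<close> _ _ y] x by blast
  moreover have "code_disc g C \<le> disc g x x'" "code_disc g C \<le> disc g x' x"
    using code_disc_le[OF \<open>is_code n C\<close>] x by auto
  moreover have "2 * disc g y x < code_disc g C + (g - 1) * (real (hw y) - real (hw x))"
    and "2 * disc g y x' < code_disc g C + (g - 1) * (real (hw y) - real (hw x'))"
    using assms(7,8) by simp_all
  ultimately show False by linarith
qed

lemma sdisc_balls_disjoint:
  assumes "is_code n C" "g > 0" and x: "x \<in> C" "x' \<in> C" "x \<noteq> x'" and y: "y \<in> vecs n"
    and "disc g y x < (code_sdisc g C + (g - 1) * real (hw y)) / 2"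
    and "disc g y x' < (code_sdisc g C + (g - 1) * real (hw y)) / 2"
  shows False
proof -
  have "C \<subseteq> vecs n" using \<open>is_code n C\<close> by (simp add: is_code_def)
  then have "2 * sdisc g x x'
      \<le> (2 * disc g y x - (g - 1) * real (hw y)) + (2 * disc g y x' - (g - 1) * real (hw y))"
    using sdisc_le[OF \<open>g > 0\<close> _ _ y] x by blast
  moreover have "code_sdisc g C \<le> sdisc g x x'"
    using code_sdisc_le[OF \<open>is_code n C\<close>] x by auto
  moreover have "2 * disc g y x < code_sdisc g C + (g - 1) * real (hw y)"
    and "2 * disc g y x' < code_sdisc g C + (g - 1) * real (hw y)"
    using assms(7,8) by simp_all
  ultimately show False by linarith
qed

subsection \<open>Counting words at given weight and discrepancy\<close>

lemma card_subsets_Int_Diff: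
  assumes X: "X \<subseteq> {..<n}"
  shows "card {Y. Y \<subseteq> {..<n} \<and> card (Y \<inter> X) = u \<and> card (Y - X) = a}
     = (card X choose u) * ((n - card X) choose a)"
proof -
  let ?L = "{Y. Y \<subseteq> {..<n} \<and> card (Y \<inter> X) = u \<and> card (Y - X) = a}"
  let ?R = "{U. U \<subseteq> X \<and> card U = u} \<times> {A. A \<subseteq> {..<n} - X \<and> card A = a}"
  have "bij_betw (\<lambda>Y. (Y \<inter> X, Y - X)) ?L ?R"
  proof (rule bij_betw_imageI)
    show "inj_on (\<lambda>Y. (Y \<inter> X, Y - X)) ?L" by (rule inj_onI) blast
    show "(\<lambda>Y. (Y \<inter> X, Y - X)) ` ?L = ?R"
    proof
      show "(\<lambda>Y. (Y \<inter> X, Y - X)) ` ?L \<subseteq> ?R" by auto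
      show "?R \<subseteq> (\<lambda>Y. (Y \<inter> X, Y - X)) ` ?L"
      proof
        fix P assume "P \<in> ?R"
        then obtain U A where P: "P = (U, A)" and U: "U \<subseteq> X" "card U = u"
          and A: "A \<subseteq> {..<n} - X" "card A = a" by auto
        have "(U \<union> A) \<inter> X = U" "(U \<union> A) - X = A" using U A by auto
        moreover have "U \<union> A \<in> ?L" using U A X calculation by auto
        ultimately show "P \<in> (\<lambda>Y. (Y \<inter> X, Y - X)) ` ?L"
          unfolding P by (intro image_eqI[of _ _ "U \<union> A"]) simp_all
      qed
    qed
  qed
  then have "card ?L = card ?R" by (rule bij_betw_same_card)
  also have "\<dots> = (card X choose u) * (card ({..<n} - X) choose a)"
    using finite_subset[OF X] by (simp add: card_cartesian_product n_subsets)
  also have "card ({..<n} - X) = n - card X"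
    using X finite_subset[OF X] by (simp add: card_Diff_subset)
  finally show ?thesis .
qed

text \<open>If y keeps u of the j ones of x and adds a new ones, then \<open>w(y) = u + a\<close> and
\<open>\<delta>(y,x) = \<gamma>a + (j - u)\<close>; this linear system determines u and a.\<close>

lemma kept_added_iff:
  fixes g u a c i j s :: real
  assumes "g + 1 > 0" "j = u + c"
  shows "(u + a = i \<and> g * a + c = s) \<longleftrightarrow> u = (i * g - s + j) / (g + 1) \<and> a = (s - j + i) / (g + 1)"
proof
  assume "u + a = i \<and> g * a + c = s"
  then have "u * (g + 1) = i * g - s + j" "a * (g + 1) = s - j + i"
    using assms by (auto simp: algebra_simps)
  then show "u = (i * g - s + j) / (g + 1) \<and> a = (s - j + i) / (g + 1)"
    using assms by (simp add: field_simps)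
next
  assume "u = (i * g - s + j) / (g + 1) \<and> a = (s - j + i) / (g + 1)"
  then have h: "u * (g + 1) = i * g - s + j" "a * (g + 1) = s - j + i"
    using assms by (simp_all add: field_simps)
  then have "(u + a) * (g + 1) = i * (g + 1)" by (simp add: algebra_simps)
  then have "u + a = i" using assms by simp
  moreover have "g * a + c = s" using h \<open>u + a = i\<close> assms by (simp add: algebra_simps)
  ultimately show "u + a = i \<and> g * a + c = s" by simp
qed

lemma Bin_of_nat [simp]: "Bin (real m) (real k) = real (m choose k)"
  by (simp add: Bin_def)

lemma card_subsets_disc_eq_lam:
  assumes gp: "g + 1 > 0" and X: "X \<subseteq> {..<n}" "card X = j"
  shows "real (card {Y. Y \<subseteq> {..<n} \<and> card Y = i \<and> g * real (card (Y - X)) + real (card (X - Y)) = s})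
    = lam n g i j s"
proof -
  define U where "U = (real i * g - s + real j) / (g + 1)"
  define A where "A = (s - real j + real i) / (g + 1)"
  have fX: "finite X" using X finite_subset by blast
  have jn: "j \<le> n" using card_mono[OF _ X(1)] X(2) by simp
  have "card Y = i \<and> g * real (card (Y - X)) + real (card (X - Y)) = s
      \<longleftrightarrow> real (card (Y \<inter> X)) = U \<and> real (card (Y - X)) = A" if "Y \<subseteq> {..<n}" for Y
  proof -
    have "finite Y" using that finite_subset by blast
    then have "real (card Y) = real (card (Y \<inter> X)) + real (card (Y - X))"
      using card_Int_Diff[of Y X] by simp
    then have "card Y = i \<longleftrightarrow> real (card (Y \<inter> X)) + real (card (Y - X)) = real i"
      by (simp only: of_nat_eq_iff[symmetric, where 'a = real])
    moreover have "real j = real (card (Y \<inter> X)) + real (card (X - Y))"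
      using card_Int_Diff[OF fX, of Y] X(2) by (simp add: Int_commute)
    note kept_added_iff[OF gp this, where a = "real (card (Y - X))" and i = "real i" and s = s]
    ultimately show ?thesis unfolding U_def A_def by simp
  qed
  then have eq: "{Y. Y \<subseteq> {..<n} \<and> card Y = i \<and> g * real (card (Y - X)) + real (card (X - Y)) = s}
      = {Y. Y \<subseteq> {..<n} \<and> real (card (Y \<inter> X)) = U \<and> real (card (Y - X)) = A}" by blast
  have lam: "lam n g i j s = Bin (real j) U * Bin (real (n - j)) A"
    unfolding lam_def U_def A_def using jn by simp
  show ?thesis
  proof (cases "U \<in> \<nat> \<and> A \<in> \<nat>")
    case True
    then obtain u a where "U = real u" "A = real a" by (auto elim!: Nats_cases)
    then show ?thesis unfolding eq lam using card_subsets_Int_Diff[OF X(1), of u a] X(2) by simp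
  next
    case False
    have none: "{Y. Y \<subseteq> {..<n} \<and> real (card (Y \<inter> X)) = U \<and> real (card (Y - X)) = A} = {}"
    proof (rule equals0I)
      fix Y assume "Y \<in> {Y. Y \<subseteq> {..<n} \<and> real (card (Y \<inter> X)) = U \<and> real (card (Y - X)) = A}"
      then have "U \<in> \<nat>" "A \<in> \<nat>" by (metis (mono_tags, lifting) mem_Collect_eq of_nat_in_Nats)+
      with False show False by blast
    qed
    moreover have "Bin (real j) U * Bin (real (n - j)) A = 0" using False by (auto simp: Bin_def)
    ultimately show ?thesis unfolding eq lam none by simp
  qed
qed

lemma card_disc_shell:
  assumes "g + 1 > 0" and "x \<in> vecs n"
  shows "real (card {y \<in> vecs n. hw y = i \<and> disc g y x = s}) = lam n g i (hw x) s"
proof -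
  have "{y \<in> vecs n. hw y = i \<and> disc g y x = s}
      = {y \<in> vecs n. card (support y) = i
          \<and> g * real (card (support y - support x)) + real (card (support x - support y)) = s}"
    using assms(2) dab_eq_card_Diff by (auto simp: vecs_def disc_def hw_eq_card_support)
  moreover have "support x \<subseteq> {..<n}" using assms(2) by (auto simp: support_def vecs_def)
  ultimately show ?thesis
    using card_subsets_disc_eq_lam[OF assms(1)] card_vecs_support[of n "\<lambda>Y. card Y = i
        \<and> g * real (card (Y - support x)) + real (card (support x - Y)) = s"]
    by (simp add: hw_eq_card_support)
qed

lemma disc_nonneg: "g \<ge> 0 \<Longrightarrow> disc g y x \<ge> 0"
  unfolding disc_def by simp

lemma disc_in_Sset: "disc g y x \<in> Sset g"
  unfolding disc_def Sset_def
  by (rule CollectI, intro exI[of _ "dab False True y x"] exI[of _ "dab True False y x"]) simp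

lemma finite_Sbelow:
  assumes g: "g > 0" shows "finite (Sbelow g h)"
proof -
  have "Sbelow g h \<subseteq> (\<lambda>(a, b). real a + g * real b) ` ({..nat \<lceil>h\<rceil>} \<times> {..nat \<lceil>h / g\<rceil>})"
  proof
    fix s assume "s \<in> Sbelow g h"
    then obtain a b :: nat where s: "s = real a + g * real b" and "s < h"
      unfolding Sbelow_def Sset_def by auto
    moreover have "real a \<le> s" using s g by simp
    ultimately have "a \<le> nat \<lceil>h\<rceil>" by linarith
    moreover have "real b \<le> h / g" using s \<open>s < h\<close> g by (simp add: field_simps)
    then have "b \<le> nat \<lceil>h / g\<rceil>" by linarith
    ultimately show "s \<in> (\<lambda>(a, b). real a + g * real b) ` ({..nat \<lceil>h\<rceil>} \<times> {..nat \<lceil>h / g\<rceil>})"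
      using s by force
  qed
  then show ?thesis by (rule finite_subset) simp
qed

lemma card_disc_ball:
  assumes g: "g > 0" and x: "x \<in> vecs n"
  shows "(\<Sum>s\<in>Sbelow g h. lam n g i (hw x) s) = real (card {y \<in> vecs n. hw y = i \<and> disc g y x < h})"
proof -
  let ?V = "{y \<in> vecs n. hw y = i}"
  have "(\<Sum>s\<in>Sbelow g h. lam n g i (hw x) s) = (\<Sum>s\<in>Sbelow g h. real (card {y \<in> ?V. disc g y x = s}))"
    using card_disc_shell[OF _ x] g by simp
  also have "\<dots> = real (card (\<Union>s\<in>Sbelow g h. {y \<in> ?V. disc g y x = s}))"
    using finite_Sbelow[OF g] finite_vecs by (subst card_UN_disjoint) auto
  also have "(\<Union>s\<in>Sbelow g h. {y \<in> ?V. disc g y x = s}) = {y \<in> vecs n. hw y = i \<and> disc g y x < h}"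
    unfolding Sbelow_def using disc_in_Sset disc_nonneg g by fastforce
  finally show ?thesis .
qed

lemma sum_weight_distribution:
  assumes "C \<subseteq> vecs n"
  shows "(\<Sum>j = 0..n. f j * real (WH j C)) = (\<Sum>x\<in>C. f (hw x))"
proof -
  have "finite C" using assms finite_vecs finite_subset by blast
  have "(\<Sum>x\<in>C. f (hw x)) = (\<Sum>j = 0..n. \<Sum>x\<in>{x \<in> C. hw x = j}. f (hw x))"
    by (rule sum.group[symmetric, OF \<open>finite C\<close>]) (use assms hw_le_length in auto)
  then show ?thesis by (simp add: WH_def mult.commute)
qed

lemma weight_distribution_packing_bound:
  assumes g: "g > 0" and C: "C \<subseteq> vecs n"
    and disjoint: "\<And>x x' y. x \<in> C \<Longrightarrow> x' \<in> C \<Longrightarrow> x \<noteq> x' \<Longrightarrow> y \<in> vecs n \<Longrightarrow> hw y = i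
        \<Longrightarrow> disc g y x < H (hw x) \<Longrightarrow> disc g y x' < H (hw x') \<Longrightarrow> False"
  shows "(\<Sum>j = 0..n. \<Sum>s\<in>Sbelow g (H j). lam n g i j s * real (WH j C)) \<le> real (n choose i)"
proof -
  define B where "B x = {y \<in> vecs n. hw y = i \<and> disc g y x < H (hw x)}" for x
  have "finite C" using C finite_vecs finite_subset by blast
  have "(\<Sum>j = 0..n. \<Sum>s\<in>Sbelow g (H j). lam n g i j s * real (WH j C))
      = (\<Sum>x\<in>C. \<Sum>s\<in>Sbelow g (H (hw x)). lam n g i (hw x) s)"
    using sum_weight_distribution[OF C, of "\<lambda>j. \<Sum>s\<in>Sbelow g (H j). lam n g i j s"]
    by (simp add: sum_distrib_right)
  also have "\<dots> = (\<Sum>x\<in>C. real (card (B x)))"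
    using card_disc_ball[OF g] C unfolding B_def by (intro sum.cong) auto
  also have "\<dots> = real (card (\<Union>x\<in>C. B x))"
    using \<open>finite C\<close> finite_vecs disjoint by (subst card_UN_disjoint) (auto simp: B_def)
  also have "\<dots> \<le> real (card {y \<in> vecs n. hw y = i})"
    unfolding B_def using finite_vecs by (intro of_nat_mono card_mono) auto
  finally show ?thesis by (simp add: card_weight_vecs)
qed

lemma gam_pos: "0 < p \<Longrightarrow> p \<le> q \<Longrightarrow> q < 1/2 \<Longrightarrow> gam p q > 0"
  unfolding gam_def log_def by (simp add: ln_less_zero divide_neg_neg)

theorem mainTheorem15:
  fixes n :: nat and p q :: real and C :: "bool list set"
  assumes "n \<ge> 2" and "0 < p" and "p \<le> q" and "q < 1/2"
    and "is_code n C"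
  shows "\<forall>i \<le> n.
     (\<Sum>j = 0..n. \<Sum>s \<in> Sbelow (gam p q) ((code_disc (gam p q) C + (gam p q - 1) * (real i - real j)) / 2).
         lam n (gam p q) i j s * real (WH j C)) \<le> real (n choose i)
   \<and> (\<Sum>j = 0..n. \<Sum>s \<in> Sbelow (gam p q) ((code_sdisc (gam p q) C + (gam p q - 1) * real i) / 2).
         lam n (gam p q) i j s * real (WH j C)) \<le> real (n choose i)"
proof (intro allI impI conjI)
  fix i
  have g: "gam p q > 0" using gam_pos assms by blast
  have C: "C \<subseteq> vecs n" using \<open>is_code n C\<close> by (simp add: is_code_def)
  show "(\<Sum>j = 0..n. \<Sum>s \<in> Sbelow (gam p q) ((code_disc (gam p q) C + (gam p q - 1) * (real i - real j)) / 2).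
         lam n (gam p q) i j s * real (WH j C)) \<le> real (n choose i)"
  proof (rule weight_distribution_packing_bound[OF g C])
    fix x x' y assume "x \<in> C" "x' \<in> C" "x \<noteq> x'" "y \<in> vecs n" "hw y = i"
      "disc (gam p q) y x < (code_disc (gam p q) C + (gam p q - 1) * (real i - real (hw x))) / 2"
      "disc (gam p q) y x' < (code_disc (gam p q) C + (gam p q - 1) * (real i - real (hw x'))) / 2"
    then show False using disc_balls_disjoint[OF \<open>is_code n C\<close> g] by blast
  qed
  show "(\<Sum>j = 0..n. \<Sum>s \<in> Sbelow (gam p q) ((code_sdisc (gam p q) C + (gam p q - 1) * real i) / 2).
         lam n (gam p q) i j s * real (WH j C)) \<le> real (n choose i)"
  proof (rule weight_distribution_packing_bound[OF g C])
    fix x x' y assume "x \<in> C" "x' \<in> C" "x \<noteq> x'" "y \<in> vecs n" "hw y = i"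
      "disc (gam p q) y x < (code_sdisc (gam p q) C + (gam p q - 1) * real i) / 2"
      "disc (gam p q) y x' < (code_sdisc (gam p q) C + (gam p q - 1) * real i) / 2"
    then show False using sdisc_balls_disjoint[OF \<open>is_code n C\<close> g] by blast
  qed
qed

end
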